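(* Let $(X,\tau_X,\partial_X)$ be a Polish topometric space, $(Y,\tau_Y)$ a Polish space, and $f\colon(Y,\tau_Y)\to(X,\tau_X)$ a continuous map with $\tau_X$-dense image such that for every open $U\subseteq Y$ and every $\varepsilon>0$ the set $(fU)_\varepsilon\subseteq X$ is open. Assume also that for every open $V\subseteq X$ and every $\varepsilon>0$ the set $(V)_\varepsilon$ is open. Then for every co-meagre $A\subseteq Y$, the $\partial_X$-closure $\overline{f(A)}^{\partial_X}$ is co-meagre in $X$.
   Context: A topometric space is a triple $(X,\tau,\partial)$ where $\tau$ is a topology and $\partial$ a metric whose topology refines $\tau$ and which is $\tau$-lower semi-continuous ($\{(x,y)\colon\partial(x,y)\le r\}$ is closed in $(X,\tau)^2$ for every $r$); it is Polish if $\tau$ is Polish. For $B\subseteq X$, $(B)_\varepsilon=\{x\colon\partial_X(x,B)<\varepsilon\}$. *)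

theory Defs
  imports "HOL-Analysis.Analysis"
begin

definition Polish_space :: "'a topology \<Rightarrow> bool" where
  "Polish_space X \<longleftrightarrow> completely_metrizable_space X \<and> separable_space X"

text \<open>Topometric space (X, tau, d): d is a metric on the carrier of tau whose topology
  refines tau, and d is tau-lower semicontinuous.\<close>
definition topometric_space :: "'a topology \<Rightarrow> ('a \<Rightarrow> 'a \<Rightarrow> real) \<Rightarrow> bool" where
  "topometric_space X d \<longleftrightarrow>
     Metric_space (topspace X) d \<and>
     (\<forall>U. openin X U \<longrightarrow> openin (Metric_space.mtopology (topspace X) d) U) \<and>
     (\<forall>r::real. closedin (prod_topology X X)
                 {(x, y). x \<in> topspace X \<and> y \<in> topspace X \<and> d x y \<le> r})"

definition Polish_topometric_space :: "'a topology \<Rightarrow> ('a \<Rightarrow> 'a \<Rightarrow> real) \<Rightarrow> bool" where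
  "Polish_topometric_space X d \<longleftrightarrow> topometric_space X d \<and> Polish_space X"

definition metric_nbhd :: "'a topology \<Rightarrow> ('a \<Rightarrow> 'a \<Rightarrow> real) \<Rightarrow> 'a set \<Rightarrow> real \<Rightarrow> 'a set" where
  "metric_nbhd X d B \<epsilon> = {x \<in> topspace X. (INF b\<in>B. ereal (d x b)) < ereal \<epsilon>}"

definition nowhere_dense_in :: "'a topology \<Rightarrow> 'a set \<Rightarrow> bool" where
  "nowhere_dense_in X S \<longleftrightarrow> S \<subseteq> topspace X \<and> X interior_of (X closure_of S) = {}"

definition meagre_in :: "'a topology \<Rightarrow> 'a set \<Rightarrow> bool" where
  "meagre_in X S \<longleftrightarrow> S \<subseteq> topspace X \<and>
     (\<exists>\<F>. countable \<F> \<and> (\<forall>N\<in>\<F>. nowhere_dense_in X N) \<and> S \<subseteq> \<Union>\<F>)"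

definition comeagre_in :: "'a topology \<Rightarrow> 'a set \<Rightarrow> bool" where
  "comeagre_in X A \<longleftrightarrow> A \<subseteq> topspace X \<and> meagre_in X (topspace X - A)"

end

theory Submission
  imports Defs
begin

text \<open>Fix a complete metric on \<open>Y\<close>, a countable dense \<open>D\<subseteq>Y\<close> and dense open sets \<open>W n\<close> with
  \<open>\<Inter>n. W n \<subseteq> A\<close>, and let \<open>\<epsilon> > 0\<close>. For \<open>U\<close> equal to \<open>Y\<close> or to a rational ball around a point
  of \<open>D\<close>, and for every \<open>n\<close>, let \<open>S\<close> be the union of the rational balls of radius \<open>< 1/(n+1)\<close>
  whose closure lies in \<open>U \<inter> W n\<close>. Since \<open>f\<close> is continuous and \<open>(-)\<^sub>\<epsilon>\<close> preserves openness,
  \<open>(f U)\<^sub>\<epsilon>\<close> lies in the closure of the open set \<open>(f S)\<^sub>\<epsilon>\<close>, so their difference is nowhere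
  dense; so is the complement of the dense open set \<open>(f Y)\<^sub>\<epsilon>\<close>. A point \<open>x\<close> avoiding these
  countably many sets admits balls \<open>B\<^sub>n\<close> of radius \<open>< 1/(n+1)\<close>, each with closure inside
  \<open>B\<^sub>n\<^sub>-\<^sub>1 \<inter> W n\<close>, such that \<open>x \<in> (f B\<^sub>n)\<^sub>\<epsilon>\<close>; completeness yields a common point
  \<open>y \<in> \<Inter>n. W n \<subseteq> A\<close> of their closures near which \<open>f\<close> stays \<open>\<epsilon>\<close>-close to \<open>x\<close>, and lower semicontinuity of
  \<open>\<partial>\<close> gives \<open>\<partial>(x, f y) \<le> \<epsilon>\<close>. Hence the points at distance \<open>> \<epsilon>\<close> from \<open>f A\<close> form a meagre set,
  and taking \<open>\<epsilon> = 1/(k+1)\<close> for all \<open>k\<close> proves the claim.\<close>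

lemma in_metric_nbhd: "x \<in> metric_nbhd X d B e \<longleftrightarrow> x \<in> topspace X \<and> (\<exists>b\<in>B. d x b < e)"
  by (simp add: metric_nbhd_def INF_less_iff)

lemma nowhere_dense_in_diff_openin:
  assumes "openin X S" "V \<subseteq> X closure_of S" "V \<subseteq> topspace X"
  shows "nowhere_dense_in X (V - S)"
proof -
  let ?T = "X interior_of (X closure_of (V - S))"
  have "X closure_of (V - S) \<subseteq> topspace X - S"
    by (rule closure_of_minimal) (use assms in \<open>auto intro: closedin_diff\<close>)
  then have "?T \<inter> S = {}"
    using interior_of_subset[of X "X closure_of (V - S)"] by blast
  then have "?T \<inter> X closure_of S = {}"
    using openin_Int_closure_of_eq_empty[of X ?T S] by simp
  moreover have "X closure_of (V - S) \<subseteq> X closure_of S"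
    by (rule closure_of_minimal) (use assms(2) in auto)
  then have "?T \<subseteq> X closure_of S"
    using interior_of_subset[of X "X closure_of (V - S)"] by blast
  ultimately show ?thesis
    using assms by (auto simp: nowhere_dense_in_def)
qed

lemma nowhere_dense_in_complement_dense_openin:
  assumes "openin X V" "X closure_of V = topspace X"
  shows "nowhere_dense_in X (topspace X - V)"
proof -
  have "closedin X (topspace X - V)"
    using assms(1) by (rule closedin_diff[OF closedin_topspace])
  then have "X closure_of (topspace X - V) = topspace X - V"
    by (rule closure_of_closedin)
  moreover have "X interior_of (topspace X - V) = {}"
    using assms(2) by (simp add: interior_of_complement)
  ultimately show ?thesis
    by (simp add: nowhere_dense_in_def)
qed

lemma meagre_in_subset: "meagre_in X T \<Longrightarrow> S \<subseteq> T \<Longrightarrow> meagre_in X S"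
  unfolding meagre_in_def by (meson subset_trans)

lemma meagre_in_countable_UN:
  assumes "\<And>n::nat. meagre_in X (S n)"
  shows "meagre_in X (\<Union>n. S n)"
proof -
  have "\<forall>n. \<exists>\<F>. countable \<F> \<and> (\<forall>N\<in>\<F>. nowhere_dense_in X N) \<and> S n \<subseteq> \<Union>\<F>"
    using assms unfolding meagre_in_def by blast
  then obtain \<F> where \<F>: "\<forall>n. countable (\<F> n) \<and> (\<forall>N\<in>\<F> n. nowhere_dense_in X N) \<and> S n \<subseteq> \<Union>(\<F> n)"
    by (rule choice[THEN exE])
  have "countable (\<Union>n. \<F> n)"
    using \<F> by (intro countable_UN) simp_all
  moreover have "\<forall>N\<in>(\<Union>n. \<F> n). nowhere_dense_in X N"
    using \<F> by simp
  moreover have "(\<Union>n. S n) \<subseteq> \<Union>(\<Union>n. \<F> n)"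
  proof -
    have "S n \<subseteq> \<Union>(\<F> n)" for n
      using \<F> by simp
    then show ?thesis
      by blast
  qed
  moreover have "(\<Union>n. S n) \<subseteq> topspace X"
    using assms unfolding meagre_in_def by blast
  ultimately show ?thesis
    unfolding meagre_in_def by (intro conjI exI[of _ "\<Union>n. \<F> n"])
qed

lemma comeagre_in_contains_Inter_dense_openin:
  assumes "comeagre_in Y A"
  obtains W :: "nat \<Rightarrow> 'a set"
  where "\<And>n. openin Y (W n)" "\<And>n. Y closure_of (W n) = topspace Y" "topspace Y \<inter> (\<Inter>n. W n) \<subseteq> A"
proof -
  obtain \<F> where \<F>: "countable \<F>" "\<forall>N\<in>\<F>. nowhere_dense_in Y N" "topspace Y - A \<subseteq> \<Union>\<F>"
    using assms unfolding comeagre_in_def meagre_in_def by blast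
  \<comment> \<open>Adding the empty set makes the family nonempty, so that it can be enumerated.\<close>
  let ?G = "insert {} \<F>"
  define W where "W n = topspace Y - Y closure_of (from_nat_into ?G n)" for n
  have G: "range (from_nat_into ?G) = ?G"
    using \<F>(1) by simp
  have "nowhere_dense_in Y N" if "N \<in> ?G" for N
    using that \<F>(2) by (auto simp: nowhere_dense_in_def)
  then have "Y interior_of (Y closure_of (from_nat_into ?G n)) = {}" for n
    using G by (auto simp: nowhere_dense_in_def)
  then have "openin Y (W n) \<and> Y closure_of (W n) = topspace Y" for n
    by (simp add: W_def closure_of_complement openin_diff)
  moreover have "topspace Y \<inter> (\<Inter>n. W n) \<subseteq> A"
  proof
    fix y assume y: "y \<in> topspace Y \<inter> (\<Inter>n. W n)"
    show "y \<in> A"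
    proof (rule ccontr)
      assume "y \<notin> A"
      then obtain N where N: "N \<in> ?G" "y \<in> N"
        using \<F>(3) y by blast
      then obtain n where "from_nat_into ?G n = N"
        by (metis G rangeE)
      then have "y \<notin> W n"
        using N(2) y closure_of_subset_Int[of Y N] by (auto simp: W_def)
      then show False
        using y by blast
    qed
  qed
  ultimately show ?thesis
    using that by blast
qed

lemma metric_nbhd_image_subset_closure_of:
  assumes f: "continuous_map Y X f" and \<delta>: "Metric_space (topspace X) \<delta>"
    and nbhd_open: "\<And>T. openin X T \<Longrightarrow> openin X (metric_nbhd X \<delta> T e)"
    and U: "U \<subseteq> Y closure_of S"
  shows "metric_nbhd X \<delta> (f ` U) e \<subseteq> X closure_of (metric_nbhd X \<delta> (f ` S) e)"
proof
  fix x assume "x \<in> metric_nbhd X \<delta> (f ` U) e"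
  then obtain u where x: "x \<in> topspace X" and u: "u \<in> U" "\<delta> x (f u) < e"
    by (auto simp: in_metric_nbhd)
  have fu: "f u \<in> topspace X"
    using u U closure_of_subset_topspace f by (fastforce simp: continuous_map_def)
  show "x \<in> X closure_of (metric_nbhd X \<delta> (f ` S) e)"
    unfolding in_closure_of
  proof (intro conjI x allI impI)
    fix T assume T: "x \<in> T \<and> openin X T"
    define P where "P = {y \<in> topspace Y. f y \<in> metric_nbhd X \<delta> T e}"
    have "u \<in> P"
      using u fu x T U closure_of_subset_topspace Metric_space.commute[OF \<delta>]
      by (fastforce simp: in_metric_nbhd P_def)
    moreover have "openin Y P"
      unfolding P_def using openin_continuous_map_preimage[OF f nbhd_open] T by blast
    moreover have "u \<in> Y closure_of S"
      using u U by blast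
    ultimately obtain s where "s \<in> S" "s \<in> P"
      by (meson in_closure_of)
    then obtain t where "s \<in> S" "t \<in> T" "\<delta> (f s) t < e" "f s \<in> topspace X"
      by (auto simp: in_metric_nbhd P_def)
    then show "\<exists>y. y \<in> metric_nbhd X \<delta> (f ` S) e \<and> y \<in> T"
      using T openin_subset Metric_space.commute[OF \<delta>] by (fastforce simp: in_metric_nbhd)
  qed
qed

lemma closedin_distance_sublevel:
  assumes "closedin (prod_topology X X) {(a, b). a \<in> topspace X \<and> b \<in> topspace X \<and> \<delta> a b \<le> e}"
    and "x \<in> topspace X"
  shows "closedin X {b \<in> topspace X. \<delta> x b \<le> e}"
proof -
  have "continuous_map X (prod_topology X X) (\<lambda>b. (x, b))"
    using assms(2) by (intro continuous_map_pairedI) auto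
  then have "closedin X {b \<in> topspace X. (x, b) \<in> {(a, b). a \<in> topspace X \<and> b \<in> topspace X \<and> \<delta> a b \<le> e}}"
    using assms(1) by (rule closedin_continuous_map_preimage)
  then show ?thesis
    using assms(2) by simp
qed

context Metric_space
begin

definition small_rational_balls :: "'a set \<Rightarrow> 'a set \<Rightarrow> real \<Rightarrow> 'a set set" where
  "small_rational_balls D V r\<^sub>0 =
     {mball c r | c r. c \<in> D \<and> r \<in> \<rat> \<and> 0 < r \<and> r < r\<^sub>0 \<and> mcball c r \<subseteq> V}"

lemma openin_subset_Union_small_rational_balls:
  assumes V: "openin mtopology V" and D: "mtopology closure_of D = M" and "r\<^sub>0 > 0"
  shows "V \<subseteq> \<Union>(small_rational_balls D V r\<^sub>0)"
proof
  fix z assume "z \<in> V"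
  then obtain s where s: "s > 0" "mball z s \<subseteq> V" and z: "z \<in> M"
    using V unfolding openin_mtopology by blast
  define t where "t = min (s/2) r\<^sub>0"
  have "t > 0"
    using s \<open>r\<^sub>0 > 0\<close> by (simp add: t_def)
  moreover have "z \<in> mtopology closure_of D"
    using D z by simp
  ultimately obtain c where c: "c \<in> D" "c \<in> mball z t"
    unfolding metric_closure_of by blast
  then have "d z c < t"
    by simp
  then obtain r where r: "r \<in> \<rat>" "d z c < r" "r < t"
    using Rats_dense_in_real by blast
  have "t \<le> s/2" "t \<le> r\<^sub>0"
    by (simp_all add: t_def)
  have "mcball c r \<subseteq> mball z s"
  proof
    fix w assume "w \<in> mcball c r"
    then have w: "w \<in> M" "c \<in> M" "d c w \<le> r"
      by auto
    then have "d z w < s"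
      using triangle[of z c w] z r \<open>t \<le> s/2\<close> by linarith
    then show "w \<in> mball z s"
      using w z by simp
  qed
  moreover have "0 < r"
    using r(2) nonneg[of z c] by linarith
  moreover have "z \<in> mball c r"
    using r(2) z c commute[of z c] by auto
  moreover have "r < r\<^sub>0"
    using r \<open>t \<le> r\<^sub>0\<close> by linarith
  ultimately have "mball c r \<in> small_rational_balls D V r\<^sub>0"
    unfolding small_rational_balls_def using c r s by blast
  then show "z \<in> \<Union>(small_rational_balls D V r\<^sub>0)"
    using \<open>z \<in> mball c r\<close> by blast
qed

lemma nowhere_dense_in_metric_nbhd_diff_small_balls:
  assumes f: "continuous_map mtopology X f" and \<delta>: "Metric_space (topspace X) \<delta>"
    and D: "mtopology closure_of D = M"
    and U: "openin mtopology U" and W: "openin mtopology W" "mtopology closure_of W = M"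
    and "r\<^sub>0 > 0"
    and image_nbhd_open: "\<And>V. openin mtopology V \<Longrightarrow> openin X (metric_nbhd X \<delta> (f ` V) e)"
    and nbhd_open: "\<And>T. openin X T \<Longrightarrow> openin X (metric_nbhd X \<delta> T e)"
  shows "nowhere_dense_in X
           (metric_nbhd X \<delta> (f ` U) e - metric_nbhd X \<delta> (f ` \<Union>(small_rational_balls D (U \<inter> W) r\<^sub>0)) e)"
proof -
  let ?S = "\<Union>(small_rational_balls D (U \<inter> W) r\<^sub>0)"
  have "U \<subseteq> M"
    using openin_subset[OF U] by simp
  then have "mtopology closure_of (U \<inter> W) = mtopology closure_of U"
    using U W(2) by (intro closure_of_openin_Int_superset) simp
  moreover have "U \<subseteq> mtopology closure_of U"
    using \<open>U \<subseteq> M\<close> by (intro closure_of_subset) simp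
  ultimately have "U \<subseteq> mtopology closure_of (U \<inter> W)"
    by simp
  also have "\<dots> \<subseteq> mtopology closure_of ?S"
    using openin_subset_Union_small_rational_balls[OF _ D \<open>r\<^sub>0 > 0\<close>, of "U \<inter> W"] U W
    by (intro closure_of_mono) blast
  finally have "metric_nbhd X \<delta> (f ` U) e \<subseteq> X closure_of (metric_nbhd X \<delta> (f ` ?S) e)"
    using metric_nbhd_image_subset_closure_of[OF f \<delta> nbhd_open] by blast
  moreover have "openin X (metric_nbhd X \<delta> (f ` ?S) e)"
    by (rule image_nbhd_open) (auto simp: small_rational_balls_def)
  ultimately show ?thesis
    by (intro nowhere_dense_in_diff_openin) (auto simp: in_metric_nbhd)
qed

lemma mcomplete_nested_balls_meet_closure:
  assumes "mcomplete" "M \<inter> Q \<noteq> {}"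
    and refine: "\<And>U n. U \<in> insert M ((\<lambda>(c, r). mball c r) ` R) \<Longrightarrow> U \<inter> Q \<noteq> {} \<Longrightarrow>
        \<exists>(c, r)\<in>R. r < 1 / Suc n \<and> mcball c r \<subseteq> U \<inter> W n \<and> mball c r \<inter> Q \<noteq> {}"
  shows "mtopology closure_of Q \<inter> (\<Inter>n. W n) \<noteq> {}"
proof -
  define good where "good n p \<longleftrightarrow> p \<in> R \<and> snd p < 1 / Suc n \<and>
      mcball (fst p) (snd p) \<subseteq> W n \<and> mball (fst p) (snd p) \<inter> Q \<noteq> {}" for n p
  have start: "\<exists>p. good 0 p"
  proof -
    obtain c r where "(c, r) \<in> R" "r < 1 / Suc 0" "mcball c r \<subseteq> M \<inter> W 0" "mball c r \<inter> Q \<noteq> {}"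
      using refine[of M 0, OF insertI1 assms(2)] by auto
    then have "good 0 (c, r)"
      by (simp add: good_def)
    then show ?thesis ..
  qed
  have step: "\<exists>q. good (Suc n) q \<and> mcball (fst q) (snd q) \<subseteq> mball (fst p) (snd p)"
    if p: "good n p" for p n
  proof -
    have "mball (fst p) (snd p) \<in> insert M ((\<lambda>(c, r). mball c r) ` R)"
      using p by (auto simp: good_def image_iff split_beta intro!: bexI[of _ p])
    moreover have "mball (fst p) (snd p) \<inter> Q \<noteq> {}"
      using p by (simp add: good_def)
    ultimately obtain c r where "(c, r) \<in> R" "r < 1 / Suc (Suc n)"
      "mcball c r \<subseteq> mball (fst p) (snd p) \<inter> W (Suc n)" "mball c r \<inter> Q \<noteq> {}"
      using refine[of "mball (fst p) (snd p)" "Suc n"] by auto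
    then have "good (Suc n) (c, r) \<and> mcball c r \<subseteq> mball (fst p) (snd p)"
      by (simp add: good_def)
    then show ?thesis
      by (metis fst_conv snd_conv)
  qed
  obtain g where "\<forall>n. good n (g n) \<and>
      mcball (fst (g (Suc n))) (snd (g (Suc n))) \<subseteq> mball (fst (g n)) (snd (g n))"
    using dependent_nat_choice[of good "\<lambda>n p q. mcball (fst q) (snd q) \<subseteq> mball (fst p) (snd p)",
        OF start step] by blast
  then have g: "\<And>n. good n (g n)"
    "\<And>n. mcball (fst (g (Suc n))) (snd (g (Suc n))) \<subseteq> mball (fst (g n)) (snd (g n))"
    by blast+
  define C where "C n = mcball (fst (g n)) (snd (g n)) \<inter> mtopology closure_of Q" for n
  have "\<Inter>(range C) \<noteq> {}"
  proof (rule mcomplete_nest[THEN iffD1, OF \<open>mcomplete\<close>, rule_format], intro conjI allI impI)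
    show "closedin mtopology (C n)" for n
      by (auto simp: C_def)
    show "C n \<noteq> {}" for n
      using g(1)[of n] closure_of_subset_Int[of mtopology Q] by (fastforce simp: C_def good_def)
    show "decseq C"
      unfolding decseq_Suc_iff C_def using g(2) mball_subset_mcball by blast
    fix \<epsilon> :: real assume "\<epsilon> > 0"
    then obtain n where "inverse (real (Suc n)) < \<epsilon>"
      using reals_Archimedean by blast
    then have "C n \<subseteq> mcball (fst (g n)) \<epsilon>"
      using g(1)[of n] by (auto simp: C_def good_def inverse_eq_divide)
    then show "\<exists>n a. C n \<subseteq> mcball a \<epsilon>"
      by blast
  qed
  moreover have "\<Inter>(range C) \<subseteq> mtopology closure_of Q \<inter> (\<Inter>n. W n)"
    using g(1) by (auto simp: C_def good_def)
  ultimately show ?thesis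
    by blast
qed

lemma exists_preimage_in_Inter_within_metric_nbhd:
  assumes "mcomplete" and f: "continuous_map mtopology X f"
    and closed: "closedin (prod_topology X X) {(a, b). a \<in> topspace X \<and> b \<in> topspace X \<and> \<delta> a b \<le> e}"
    and x: "x \<in> metric_nbhd X \<delta> (f ` M) e"
    and refine: "\<And>U n. U \<in> insert M ((\<lambda>(c, r). mball c r) ` (D \<times> (\<rat> \<inter> {0<..}))) \<Longrightarrow>
        x \<in> metric_nbhd X \<delta> (f ` U) e \<Longrightarrow>
        x \<in> metric_nbhd X \<delta> (f ` \<Union>(small_rational_balls D (U \<inter> W n) (1 / Suc n))) e"
  shows "\<exists>y\<in>M \<inter> (\<Inter>n. W n). \<delta> x (f y) \<le> e"
proof -
  define Q where "Q = {u \<in> M. \<delta> x (f u) < e}"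
  have xX: "x \<in> topspace X"
    using x by (simp add: in_metric_nbhd)
  have near: "x \<in> metric_nbhd X \<delta> (f ` U) e \<longleftrightarrow> U \<inter> Q \<noteq> {}" if "U \<subseteq> M" for U
    using that xX by (auto simp: in_metric_nbhd Q_def)
  have "closedin mtopology {u \<in> topspace mtopology. f u \<in> {b \<in> topspace X. \<delta> x b \<le> e}}"
    using closedin_distance_sublevel[OF closed xX] by (rule closedin_continuous_map_preimage[OF f])
  moreover have "{u \<in> topspace mtopology. f u \<in> {b \<in> topspace X. \<delta> x b \<le> e}} = {u \<in> M. \<delta> x (f u) \<le> e}"
    using f by (auto simp: continuous_map_def)
  ultimately have "closedin mtopology {u \<in> M. \<delta> x (f u) \<le> e}"
    by simp
  then have "mtopology closure_of Q \<subseteq> {u \<in> M. \<delta> x (f u) \<le> e}"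
    by (rule closure_of_minimal[rotated]) (auto simp: Q_def)
  moreover have "mtopology closure_of Q \<inter> (\<Inter>n. W n) \<noteq> {}"
  proof (rule mcomplete_nested_balls_meet_closure[OF \<open>mcomplete\<close>, where R = "D \<times> (\<rat> \<inter> {0<..})"])
    show "M \<inter> Q \<noteq> {}"
      using near[of M] x by blast
    fix U n
    assume U: "U \<in> insert M ((\<lambda>(c, r). mball c r) ` (D \<times> (\<rat> \<inter> {0<..})))" "U \<inter> Q \<noteq> {}"
    moreover have "U \<subseteq> M"
      using U(1) by auto
    ultimately have "x \<in> metric_nbhd X \<delta> (f ` \<Union>(small_rational_balls D (U \<inter> W n) (1 / Suc n))) e"
      using refine near by blast
    then obtain B where B: "B \<in> small_rational_balls D (U \<inter> W n) (1 / Suc n)" "x \<in> metric_nbhd X \<delta> (f ` B) e"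
      by (auto simp: in_metric_nbhd)
    then obtain c r where cr: "B = mball c r" "c \<in> D" "r \<in> \<rat>" "0 < r" "r < 1 / Suc n" "mcball c r \<subseteq> U \<inter> W n"
      unfolding small_rational_balls_def by blast
    moreover have "mball c r \<inter> Q \<noteq> {}"
      using near[OF mball_subset_mspace] B(2) cr(1) by simp
    ultimately show "\<exists>(c, r)\<in>D \<times> (\<rat> \<inter> {0<..}). r < 1 / Suc n \<and> mcball c r \<subseteq> U \<inter> W n \<and> mball c r \<inter> Q \<noteq> {}"
      by (intro bexI[of _ "(c, r)"]) auto
  qed
  ultimately show ?thesis
    by fastforce
qed

lemma diff_closure_of_subset_UN_far:
  assumes "S \<subseteq> M"
  shows "M - mtopology closure_of S \<subseteq> (\<Union>k. {x \<in> M. \<forall>y\<in>S. 1 / Suc k < d x y})"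
proof
  fix x assume x: "x \<in> M - mtopology closure_of S"
  then obtain r where "r > 0" and r: "\<forall>y\<in>S. y \<notin> mball x r"
    by (auto simp: metric_closure_of)
  then obtain k where "inverse (real (Suc k)) < r"
    using reals_Archimedean by blast
  then have "\<forall>y\<in>S. 1 / Suc k < d x y"
    using r x assms by (fastforce simp: inverse_eq_divide)
  then show "x \<in> (\<Union>k. {x \<in> M. \<forall>y\<in>S. 1 / Suc k < d x y})"
    using x by blast
qed

lemma meagre_in_far_from_image_Inter:
  fixes W :: "nat \<Rightarrow> 'a set"
  assumes "mcomplete" "countable D" "mtopology closure_of D = M" "e > 0"
    and f: "continuous_map mtopology X f" and \<delta>: "Metric_space (topspace X) \<delta>"
    and closed: "closedin (prod_topology X X) {(a, b). a \<in> topspace X \<and> b \<in> topspace X \<and> \<delta> a b \<le> e}"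
    and dense: "X closure_of (f ` M) = topspace X"
    and W: "\<And>n. openin mtopology (W n)" "\<And>n. mtopology closure_of (W n) = M"
    and image_nbhd_open: "\<And>V. openin mtopology V \<Longrightarrow> openin X (metric_nbhd X \<delta> (f ` V) e)"
    and nbhd_open: "\<And>T. openin X T \<Longrightarrow> openin X (metric_nbhd X \<delta> T e)"
  shows "meagre_in X {x \<in> topspace X. \<forall>z\<in>f ` (M \<inter> (\<Inter>n. W n)). e < \<delta> x z}"
proof -
  let ?\<U> = "insert M ((\<lambda>(c, r). mball c r) ` (D \<times> (\<rat> \<inter> {0<..})))"
  let ?bad = "\<lambda>U n. metric_nbhd X \<delta> (f ` U) e -
                metric_nbhd X \<delta> (f ` \<Union>(small_rational_balls D (U \<inter> W n) (1 / Suc n))) e"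
  \<comment> \<open>\<open>?bad U n\<close>: the part of \<open>(f U)\<^sub>e\<close> not reached through rational balls of radius
    \<open>< 1/(n+1)\<close> inside \<open>U \<inter> W n\<close>; avoiding all of them lets the balls be chosen nested.\<close>
  define \<N> where "\<N> = insert (topspace X - metric_nbhd X \<delta> (f ` M) e) (\<Union>U\<in>?\<U>. range (?bad U))"
  have bad: "?bad U n \<in> \<N>" if "U \<in> ?\<U>" for U n
    using that unfolding \<N>_def by blast
  have "countable (D \<times> (\<rat> \<inter> {0<..}))"
    using \<open>countable D\<close> countable_rat by (intro countable_SIGMA countable_Int1) auto
  then have "countable \<N>"
    unfolding \<N>_def by (intro countable_insert countable_UN countable_image) auto
  moreover have "nowhere_dense_in X N" if "N \<in> \<N>" for N
  proof -
    have "f ` M \<subseteq> metric_nbhd X \<delta> (f ` M) e"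
    proof
      fix z assume "z \<in> f ` M"
      then obtain y where y: "y \<in> M" "z = f y"
        by blast
      then have "z \<in> topspace X"
        using f by (auto simp: continuous_map_def)
      then show "z \<in> metric_nbhd X \<delta> (f ` M) e"
        using y \<open>e > 0\<close> Metric_space.zero[OF \<delta>, of z z] by (auto simp: in_metric_nbhd intro!: bexI[of _ y])
    qed
    then have "X closure_of metric_nbhd X \<delta> (f ` M) e = topspace X"
      using dense closure_of_mono closure_of_subset_topspace by (metis subset_antisym)
    then have "nowhere_dense_in X (topspace X - metric_nbhd X \<delta> (f ` M) e)"
      using image_nbhd_open[OF openin_topspace] by (intro nowhere_dense_in_complement_dense_openin) simp_all
    moreover have "nowhere_dense_in X (?bad U n)" if "U \<in> ?\<U>" for U n
    proof (rule nowhere_dense_in_metric_nbhd_diff_small_balls[OF f \<delta> assms(3) _ W(1,2) _ image_nbhd_open nbhd_open])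
      show "openin mtopology U"
        using that by auto
    qed simp
    moreover have "N = topspace X - metric_nbhd X \<delta> (f ` M) e \<or> (\<exists>U\<in>?\<U>. \<exists>n. N = ?bad U n)"
      using \<open>N \<in> \<N>\<close> unfolding \<N>_def by blast
    ultimately show ?thesis
      by blast
  qed
  moreover have "{x \<in> topspace X. \<forall>z\<in>f ` (M \<inter> (\<Inter>n. W n)). e < \<delta> x z} \<subseteq> \<Union>\<N>"
  proof (rule subsetI, rule ccontr)
    fix x assume x: "x \<in> {x \<in> topspace X. \<forall>z\<in>f ` (M \<inter> (\<Inter>n. W n)). e < \<delta> x z}" "x \<notin> \<Union>\<N>"
    have "\<exists>y\<in>M \<inter> (\<Inter>n. W n). \<delta> x (f y) \<le> e"
    proof (rule exists_preimage_in_Inter_within_metric_nbhd[OF \<open>mcomplete\<close> f closed])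
      have "topspace X - metric_nbhd X \<delta> (f ` M) e \<in> \<N>"
        by (simp add: \<N>_def)
      then show "x \<in> metric_nbhd X \<delta> (f ` M) e"
        using x by blast
      show "x \<in> metric_nbhd X \<delta> (f ` \<Union>(small_rational_balls D (U \<inter> W n) (1 / Suc n))) e"
        if "U \<in> ?\<U>" "x \<in> metric_nbhd X \<delta> (f ` U) e" for U n
        using x(2) that(2) bad[OF that(1), of n] by blast
    qed
    then obtain y where "y \<in> M \<inter> (\<Inter>n. W n)" "\<delta> x (f y) \<le> e"
      by blast
    then show False
      using x(1) by force
  qed
  ultimately show ?thesis
    using \<open>countable \<N>\<close> unfolding meagre_in_def by blast
qed



lemma meagre_in_compl_closure_of_image_Inter:
  fixes W :: "nat \<Rightarrow> 'a set"
  assumes "mcomplete" "countable D" "mtopology closure_of D = M"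
    and f: "continuous_map mtopology X f" and \<delta>: "Metric_space (topspace X) \<delta>"
    and closed: "\<And>r. closedin (prod_topology X X) {(a, b). a \<in> topspace X \<and> b \<in> topspace X \<and> \<delta> a b \<le> r}"
    and dense: "X closure_of (f ` M) = topspace X"
    and W: "\<And>n. openin mtopology (W n)" "\<And>n. mtopology closure_of (W n) = M"
    and image_nbhd_open: "\<And>V e. openin mtopology V \<Longrightarrow> e > 0 \<Longrightarrow> openin X (metric_nbhd X \<delta> (f ` V) e)"
    and nbhd_open: "\<And>T e. openin X T \<Longrightarrow> e > 0 \<Longrightarrow> openin X (metric_nbhd X \<delta> T e)"
  shows "meagre_in X (topspace X - Metric_space.mtopology (topspace X) \<delta> closure_of (f ` (M \<inter> (\<Inter>n. W n))))"
proof -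
  let ?far = "\<lambda>k. {x \<in> topspace X. \<forall>z\<in>f ` (M \<inter> (\<Inter>n. W n)). 1 / Suc k < \<delta> x z}"
  have "meagre_in X (?far k)" for k
    by (rule meagre_in_far_from_image_Inter[OF assms(1-3) _ f \<delta> closed dense W])
       (simp_all add: image_nbhd_open nbhd_open)
  moreover have "f ` (M \<inter> (\<Inter>n. W n)) \<subseteq> topspace X"
    using f by (auto simp: continuous_map_def)
  then have "topspace X - Metric_space.mtopology (topspace X) \<delta> closure_of (f ` (M \<inter> (\<Inter>n. W n)))
      \<subseteq> (\<Union>k. ?far k)"
    by (rule Metric_space.diff_closure_of_subset_UN_far[OF \<delta>])
  ultimately show ?thesis
    by (rule meagre_in_subset[OF meagre_in_countable_UN])
qed

end

theorem theorem5p2: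
  fixes X :: "'a topology" and d :: "'a \<Rightarrow> 'a \<Rightarrow> real"
    and Y :: "'b topology" and f :: "'b \<Rightarrow> 'a"
  assumes "Polish_topometric_space X d"
    and "Polish_space Y"
    and "continuous_map Y X f"
    and "X closure_of (f ` topspace Y) = topspace X"
    and "\<And>U \<epsilon>. openin Y U \<Longrightarrow> \<epsilon> > 0 \<Longrightarrow> openin X (metric_nbhd X d (f ` U) \<epsilon>)"
    and "\<And>V \<epsilon>. openin X V \<Longrightarrow> \<epsilon> > 0 \<Longrightarrow> openin X (metric_nbhd X d V \<epsilon>)"
    and "comeagre_in Y A"
  shows "comeagre_in X (Metric_space.mtopology (topspace X) d closure_of (f ` A))"
proof -
  interpret X: Metric_space "topspace X" d
    using assms(1) by (simp add: Polish_topometric_space_def topometric_space_def)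
  obtain M \<rho> where "Metric_space M \<rho>" "Metric_space.mcomplete M \<rho>" and Y: "Y = Metric_space.mtopology M \<rho>"
    using assms(2) by (auto simp: Polish_space_def completely_metrizable_space_def)
  interpret Y: Metric_space M \<rho> by fact
  obtain D where D: "countable D" "Y.mtopology closure_of D = M"
    using assms(2) Y by (auto simp: Polish_space_def separable_space_def)
  obtain W :: "nat \<Rightarrow> 'b set" where W: "\<And>n. openin Y (W n)" "\<And>n. Y closure_of (W n) = M" "M \<inter> (\<Inter>n. W n) \<subseteq> A"
    using comeagre_in_contains_Inter_dense_openin[OF assms(7)] Y by auto
  have "meagre_in X (topspace X - X.mtopology closure_of (f ` (M \<inter> (\<Inter>n. W n))))"
  proof (rule Y.meagre_in_compl_closure_of_image_Inter[OF \<open>Y.mcomplete\<close> D _ X.Metric_space_axioms])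
    show "closedin (prod_topology X X) {(a, b). a \<in> topspace X \<and> b \<in> topspace X \<and> d a b \<le> r}" for r
      using assms(1) by (simp add: Polish_topometric_space_def topometric_space_def)
  qed (use assms(3-6) W Y in simp_all)
  moreover have "X.mtopology closure_of (f ` (M \<inter> (\<Inter>n. W n))) \<subseteq> X.mtopology closure_of (f ` A)"
    using W(3) by (intro closure_of_mono) blast
  moreover have "X.mtopology closure_of (f ` A) \<subseteq> topspace X"
    using closure_of_subset_topspace[of X.mtopology] by simp
  ultimately show ?thesis
    unfolding comeagre_in_def by (meson Diff_mono meagre_in_subset order_refl)
qed

end
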